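(* Let $L>0$, $\sigma$, $s$ be such that $Q_\sigma(L,s)>0$, and let $Y$ be the solution of the discrete Riemann--Hilbert problem described in the context. Fix $a\in\mathbb{Z}'$, let $C_Y(a),Y_1(a),\widetilde C_Y(a)$ be as in the Laurent expansions described in the context, and let $c_Y(a):=\det C_Y(a)$. Then \[ \frac{\mathbf g(a)^\top Y_1(a)\mathbf f(a)}{1-M_s(a,a)}=\frac{c_Y(a)-1}{c_Y(a)}, \] and there exists $d_Y(a)\in\mathbb{C}$ such that $\widetilde C_Y(a)C_Y(a)=c_Y(a)I+d_Y(a)W_Y(a)$.
   Context: $\mathbb{Z}'=\mathbb{Z}+\tfrac12$, $\mathbb{Z}'_+=\mathbb{Z}'\cap(0,\infty)$; $\mathrm{J}_k$ is the Bessel function of the first kind; $L>0$; $\sigma:\mathbb{Z}'\to[0,1]$ with $\sum_{l<0}\sigma(l)<\infty$; $Q_\sigma(L,s)=\det(1-P_s\mathcal K_\sigma P_s)$ where $\mathcal K_\sigma$ is the operator on $\ell^2(\mathbb{Z}')$ with kernel $K_\sigma(a,b)=\sum_{l\in\mathbb{Z}'}\sigma(l)\mathrm{J}_{a+l}(2L)\mathrm{J}_{b+l}(2L)$ and $P_s$ is the orthogonal projection onto $\ell^2(\{s+1,s+2,\dots\})$. Let $K^{\mathsf{Be}}(a,a)=\sum_{l\in\mathbb{Z}'_+}\mathrm{J}_{a+l}(2L)^2$, $M_s(a,a)=\sigma(a-s-\tfrac12)K^{\mathsf{Be}}(a,a)$ (one has $M_s(a,a)<1$), $\mathbf f(a)=\sqrt{\sigma(a-s-\tfrac12)}\,(\mathrm{J}_{a-\frac12}(2L),\,L\mathrm{J}_{a+\frac12}(2L))^\top$,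 $\mathbf g(a)=\sqrt{\sigma(a-s-\tfrac12)}\,(L\mathrm{J}_{a+\frac12}(2L),\,-\mathrm{J}_{a-\frac12}(2L))^\top$, and $W_Y(a)=\mathbf f(a)\mathbf g(a)^\top/(1-M_s(a,a))$. Discrete RH problem: $Y(z)$ is a $2\times2$ matrix-valued meromorphic function with simple poles only at points of $\mathbb{Z}'$; for every $a\in\mathbb{Z}'$, $Y(z)\bigl(I-\frac{W_Y(a)}{z-a}\bigr)$ has a removable singularity at $z=a$; and $\sup_{|z|=n}|Y(z)-I|\to0$ as $n\to+\infty$ through integers. When $Q_\sigma(L,s)>0$ it has a unique solution, with $\det Y\equiv1$. Near each $a\in\mathbb{Z}'$ one has Laurent expansions $Y(z)=C_Y(a)\bigl(\frac{W_Y(a)}{z-a}+I+Y_1(a)(z-a)+O((z-a)^2)\bigr)$ and $Y^{-1}(z)=\bigl(-\frac{W_Y(a)}{z-a}+I+\widetilde Y_1(a)(z-a)+O((z-a)^2)\bigr)\widetilde C_Y(a)$ with $C_Y(a),\widetilde C_Y(a)$ invertible matrices. *)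

theory Defs
  imports "HOL-Analysis.Analysis"
begin

definition Zp :: "real set" where
  "Zp = {x. \<exists>k::int. x = of_int k + 1/2}"

text \<open>Bessel function of the first kind of real order nu, at x > 0
  (series with the entire reciprocal Gamma function, so integer negative orders are covered).\<close>
definition besselJ :: "real \<Rightarrow> real \<Rightarrow> real" where
  "besselJ nu x = (\<Sum>m. (-1)^m * rGamma (real m + nu + 1) / fact m * (x/2) powr (2 * real m + nu))"

definition Ksigma :: "(real \<Rightarrow> real) \<Rightarrow> real \<Rightarrow> real \<Rightarrow> real \<Rightarrow> real" where
  "Ksigma \<sigma> L a b = (\<Sum>\<^sub>\<infinity>l\<in>Zp. \<sigma> l * besselJ (a + l) (2*L) * besselJ (b + l) (2*L))"

text \<open>Fredholm determinant det(1 - K) of an operator with kernel K on l^2(A) (Fredholm series).\<close>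
definition fredholm_det :: "(real \<Rightarrow> real \<Rightarrow> real) \<Rightarrow> real set \<Rightarrow> real" where
  "fredholm_det K A = (\<Sum>n. (-1)^n / fact n *
     (\<Sum>\<^sub>\<infinity>xs\<in>{xs. length xs = n \<and> set xs \<subseteq> A}.
        (\<Sum>p | p permutes {..<n}. of_int (sign p) * (\<Prod>i<n. K (xs!i) (xs!(p i))))))"

definition Qsigma :: "(real \<Rightarrow> real) \<Rightarrow> real \<Rightarrow> real \<Rightarrow> real" where
  "Qsigma \<sigma> L s = fredholm_det (Ksigma \<sigma> L) {x \<in> Zp. s + 1 \<le> x}"

definition KBe :: "real \<Rightarrow> real \<Rightarrow> real" where
  "KBe L a = (\<Sum>\<^sub>\<infinity>l\<in>{l\<in>Zp. 0 < l}. (besselJ (a + l) (2*L))^2)"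

definition Ms :: "(real \<Rightarrow> real) \<Rightarrow> real \<Rightarrow> real \<Rightarrow> real \<Rightarrow> real" where
  "Ms \<sigma> L s a = \<sigma> (a - s - 1/2) * KBe L a"

definition fvec :: "(real \<Rightarrow> real) \<Rightarrow> real \<Rightarrow> real \<Rightarrow> real \<Rightarrow> complex^2" where
  "fvec \<sigma> L s a = vector
     [complex_of_real (sqrt (\<sigma> (a - s - 1/2)) * besselJ (a - 1/2) (2*L)),
      complex_of_real (sqrt (\<sigma> (a - s - 1/2)) * (L * besselJ (a + 1/2) (2*L)))]"

definition gvec :: "(real \<Rightarrow> real) \<Rightarrow> real \<Rightarrow> real \<Rightarrow> real \<Rightarrow> complex^2" where
  "gvec \<sigma> L s a = vector
     [complex_of_real (sqrt (\<sigma> (a - s - 1/2)) * (L * besselJ (a + 1/2) (2*L))),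
      complex_of_real (sqrt (\<sigma> (a - s - 1/2)) * (- besselJ (a - 1/2) (2*L)))]"

definition cscale :: "complex \<Rightarrow> complex^2^2 \<Rightarrow> complex^2^2" where
  "cscale c M = (\<chi> i j. c * M$i$j)"

definition WY :: "(real \<Rightarrow> real) \<Rightarrow> real \<Rightarrow> real \<Rightarrow> real \<Rightarrow> complex^2^2" where
  "WY \<sigma> L s a = (\<chi> i j. (fvec \<sigma> L s a)$i * (gvec \<sigma> L s a)$j / complex_of_real (1 - Ms \<sigma> L s a))"

definition dRHP :: "(real \<Rightarrow> real) \<Rightarrow> real \<Rightarrow> real \<Rightarrow> (complex \<Rightarrow> complex^2^2) \<Rightarrow> bool" where
  "dRHP \<sigma> L s Y \<longleftrightarrow>
     (\<forall>i j. (\<lambda>z. Y z $ i $ j) holomorphic_on (- (complex_of_real ` Zp))) \<and>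
     (\<forall>a\<in>Zp. \<forall>i j. \<exists>c. ((\<lambda>z. (z - complex_of_real a) * Y z $ i $ j) \<longlongrightarrow> c) (at (complex_of_real a))) \<and>
     (\<forall>a\<in>Zp. \<forall>i j. \<exists>c. ((\<lambda>z. (Y z ** (mat 1 - cscale (1 / (z - complex_of_real a)) (WY \<sigma> L s a))) $ i $ j)
                          \<longlongrightarrow> c) (at (complex_of_real a))) \<and>
     ((\<lambda>n::nat. SUP z\<in>sphere 0 (real n). norm (Y z - mat 1)) \<longlonglongrightarrow> 0)"

end

theory Submission
  imports Defs "HOL-Complex_Analysis.Conformal_Mappings"
begin

(* The jump condition makes each lattice point a removable
   singularity of det Y, because det (I - W/(z - a)) = 1 for the traceless rank-one matrix W, and
   the normalisation of Y on the circles |z| = n with the maximum modulus principle gives det Y = 1.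

   Near z = a write t = z - a and Y = C (W/t + I + Y1 t) + O(t^2). The t^0 coefficient of
   det Y = 1 gives det C (1 - tr (W Y1)) = 1, and tr (W Y1) = g^T Y1 f / (1 - M_s(a,a)).
   The same for Y^-1 gives det Ct (1 + tr (W Yt1)) = 1, and the coefficients of t^-1 and t^0
   in Y^-1 Y = I say that P = Ct C commutes with W and P - W P Y1 + Yt1 P W = I. As W^2 = 0,
   P = alpha I + beta W; then alpha (1 - tr (W Y1)) and alpha (1 + tr (W Yt1)) have sum 2 (trace)
   and product det P (1 - tr (W Y1)) (1 + tr (W Yt1)) = 1, so both are 1 and alpha = det C. *)

section \<open>\<open>2 \<times> 2\<close> matrices\<close>

lemma mat2_eq_iff:
  "(A::'a^2^2) = B \<longleftrightarrow> A$1$1 = B$1$1 \<and> A$1$2 = B$1$2 \<and> A$2$1 = B$2$1 \<and> A$2$2 = B$2$2"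
  by (auto simp: vec_eq_iff forall_2)

lemma matrix_mult_2_nth: "((A::'a::semiring_1^2^2) ** B)$i$j = A$i$1 * B$1$j + A$i$2 * B$2$j"
  by (simp add: matrix_matrix_mult_def sum_2)

lemma mat_1_2_nth [simp]:
  "(mat 1::'a::zero_neq_one^2^2)$1$1 = 1" "(mat 1::'a::zero_neq_one^2^2)$2$2 = 1"
  "(mat 1::'a::zero_neq_one^2^2)$1$2 = 0" "(mat 1::'a::zero_neq_one^2^2)$2$1 = 0"
  by (simp_all add: mat_def)

lemma trace_2: "trace (A::'a::semiring_1^2^2) = A$1$1 + A$2$2"
  by (simp add: trace_def sum_2)

lemma matrix_add_rdistrib: "(A + B) ** C = A ** C + B ** C"
  by (vector matrix_matrix_mult_def sum.distrib[symmetric] field_simps)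

lemma uminus_matrix_mult: "(- A :: 'a::ring_1^'n^'m) ** B = - (A ** B)"
  by (simp add: vec_eq_iff matrix_matrix_mult_def sum_negf)

lemma matrix_inv_mult_left:
  fixes A :: "'a::field^'n^'n"
  assumes "invertible A"
  shows "matrix_inv A ** A = mat 1"
  using assms unfolding matrix_inv_def invertible_def by (rule someI2_ex) auto

lemma norm_nth_nth_le: "norm (A $ i $ j) \<le> norm A"
  using Finite_Cartesian_Product.norm_nth_le[of "A $ i" j]
    Finite_Cartesian_Product.norm_nth_le[of A i]
  by linarith

lemma norm_det_minus_1_le:
  fixes A :: "'a::real_normed_field^2^2"
  shows "norm (det A - 1) \<le> 2 * norm (A - mat 1) + 2 * norm (A - mat 1)^2"
proof -
  define N where "N = norm (A - mat 1)"
  have entry: "norm ((A - mat 1)$i$j) \<le> N" for i j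
    unfolding N_def by (rule norm_nth_nth_le)
  define e11 where "e11 = A$1$1 - 1"
  define e22 where "e22 = A$2$2 - 1"
  have e11: "norm e11 \<le> N" using entry[of 1 1] by (simp add: e11_def)
  have e22: "norm e22 \<le> N" using entry[of 2 2] by (simp add: e22_def)
  have e12: "norm (A$1$2) \<le> N" using entry[of 1 2] by simp
  have e21: "norm (A$2$1) \<le> N" using entry[of 2 1] by simp
  have "det A - 1 = e11 + e22 + e11 * e22 - A$1$2 * A$2$1"
    by (simp add: det_2 e11_def e22_def algebra_simps)
  also have "norm \<dots> \<le> norm e11 + norm e22 + norm e11 * norm e22 + norm (A$1$2) * norm (A$2$1)"
    by (intro norm_triangle_le_diff norm_triangle_le add_mono order_refl)
      (simp_all add: norm_mult norm_triangle_ineq)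
  also have "\<dots> \<le> N + N + N * N + N * N"
    by (intro add_mono mult_mono e11 e22 e12 e21) (auto simp: N_def)
  finally show ?thesis by (simp add: N_def power2_eq_square)
qed

lemma cscale_nth [simp]: "cscale c M $ i $ j = c * M$i$j"
  by (simp add: cscale_def)

lemma cscale_uminus: "cscale c (- M) = - cscale c M"
  by (simp add: vec_eq_iff)

lemma trace_cscale: "trace (cscale c A) = c * trace A"
  by (simp add: trace_def sum_distrib_left)

lemma cscale_matrix_mult: "cscale c A ** B = cscale c (A ** B)"
  by (simp add: vec_eq_iff matrix_matrix_mult_def sum_distrib_left mult.assoc)

lemma matrix_mult_cscale: "A ** cscale c B = cscale c (A ** B)"
  by (simp add: vec_eq_iff matrix_matrix_mult_def sum_distrib_left mult.left_commute)

lemma traceless_singular_square_eq_0: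
  fixes W :: "complex^2^2"
  assumes "trace W = 0" "det W = 0"
  shows "W ** W = 0"
proof -
  have w22: "W$2$2 = - W$1$1" using assms(1) by (simp add: trace_2 add_eq_0_iff)
  then have "W$1$1 * W$1$1 + W$1$2 * W$2$1 = 0" using assms(2) by (simp add: det_2 add_eq_0_iff)
  then show ?thesis unfolding mat2_eq_iff matrix_mult_2_nth w22
    by (simp add: algebra_simps)
qed

lemma det_mat_1_minus_cscale:
  fixes W :: "complex^2^2"
  assumes "trace W = 0" "det W = 0"
  shows "det (mat 1 - cscale x W) = 1"
proof -
  have "det (mat 1 - cscale x W) = 1 - x * trace W + x^2 * det W"
    by (simp add: det_2 trace_2 algebra_simps power2_eq_square)
  then show ?thesis using assms by simp
qed

lemma commutes_with_traceless_singular: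
  fixes W P :: "complex^2^2"
  assumes tr: "trace W = 0" and dW: "det W = 0" and W0: "W \<noteq> 0" and comm: "P ** W = W ** P"
  shows "\<exists>\<alpha> \<beta>. P = cscale \<alpha> (mat 1) + cscale \<beta> W"
proof -
  have c: "P$1$1*W$1$1 + P$1$2*W$2$1 = W$1$1*P$1$1 + W$1$2*P$2$1"
          "P$1$1*W$1$2 + P$1$2*W$2$2 = W$1$1*P$1$2 + W$1$2*P$2$2"
          "P$2$1*W$1$1 + P$2$2*W$2$1 = W$2$1*P$1$1 + W$2$2*P$2$1"
    using comm unfolding mat2_eq_iff matrix_mult_2_nth by auto
  have w22: "W$2$2 = - W$1$1" using tr by (simp add: trace_2 add_eq_0_iff)
  have sq: "W$1$1 * W$1$1 = - (W$1$2 * W$2$1)"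
    using dW unfolding det_2 w22 by (simp add: algebra_simps) (metis minus_equation_iff)
  show ?thesis
  proof (cases "W$1$2 = 0")
    case False
    define \<beta> where "\<beta> = P$1$2 / W$1$2"
    define \<alpha> where "\<alpha> = P$2$2 + \<beta> * W$1$1"
    have "P$2$1 = \<beta> * W$2$1" using c(1) False unfolding \<beta>_def by (simp add: field_simps)
    moreover have "P$1$1 = \<alpha> + \<beta> * W$1$1"
      using c(2) False w22 unfolding \<alpha>_def \<beta>_def by (simp add: field_simps)
    ultimately have "P = cscale \<alpha> (mat 1) + cscale \<beta> W"
      using False w22 unfolding mat2_eq_iff \<alpha>_def \<beta>_def by simp
    then show ?thesis by blast
  next
    case True
    then have w11: "W$1$1 = 0" using sq by simp
    have w21: "W$2$1 \<noteq> 0" using W0 True w11 w22 unfolding mat2_eq_iff by auto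
    have "P$1$2 = 0" using c(1) True w21 by simp
    moreover have "P$1$1 = P$2$2" using c(3) w11 w22 w21 by simp
    ultimately have "P = cscale (P$2$2) (mat 1) + cscale (P$2$1 / W$2$1) W"
      using True w11 w22 w21 unfolding mat2_eq_iff by simp
    then show ?thesis by blast
  qed
qed

lemma eq_1_if_add_eq_2_mult_eq_1:
  fixes u v :: "'a::idom"
  assumes "u + v = 2" "u * v = 1"
  shows "u = 1"
proof -
  have "(u - 1) * (u - 1) = u * (u + v - 2) + (1 - u * v)" by algebra
  then show ?thesis using assms by simp
qed

lemma commuting_matrix_eq_scalar_plus:
  fixes W P Y Z :: "complex^2^2" and c e :: complex
  assumes tr: "trace W = 0" and dW: "det W = 0"
    and c: "c * (1 - trace (W ** Y)) = 1" and e: "e * (1 + trace (W ** Z)) = 1"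
    and dP: "det P = e * c" and comm: "P ** W = W ** P"
    and P: "P - W ** P ** Y + Z ** P ** W = mat 1"
  shows "\<exists>d. P = cscale c (mat 1) + cscale d W"
proof -
  obtain \<alpha> \<beta> where P_eq: "P = cscale \<alpha> (mat 1) + cscale \<beta> W"
  proof (cases "W = 0")
    case True
    then have "P = mat 1" using P by simp
    then have "P = cscale 1 (mat 1) + cscale 0 W" unfolding mat2_eq_iff by simp
    then show ?thesis using that by blast
  next
    case False
    then show ?thesis using commutes_with_traceless_singular[OF tr dW False comm] that by blast
  qed
  have "trace P - trace (W ** P ** Y) + trace (Z ** P ** W) = 2"
    using arg_cong[OF P, of trace] by (simp add: trace_add trace_sub trace_I)
  moreover have WP: "W ** P = cscale \<alpha> W" and PW: "P ** W = cscale \<alpha> W"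
    using traceless_singular_square_eq_0[OF tr dW]
    by (simp_all add: P_eq matrix_add_ldistrib matrix_add_rdistrib matrix_mult_cscale
        cscale_matrix_mult vec_eq_iff)
  moreover have "trace P = 2 * \<alpha>"
    using tr by (simp add: P_eq trace_add trace_cscale trace_I)
  moreover have "trace (W ** P ** Y) = \<alpha> * trace (W ** Y)"
    using WP by (simp add: cscale_matrix_mult trace_cscale)
  moreover have "trace (Z ** P ** W) = \<alpha> * trace (W ** Z)"
    using PW trace_mul_sym[of Z W]
    by (simp flip: matrix_mul_assoc add: matrix_mult_cscale trace_cscale)
  ultimately have sum: "\<alpha> * (1 - trace (W ** Y)) + \<alpha> * (1 + trace (W ** Z)) = 2"
    by (simp add: algebra_simps)
  have prod: "\<alpha> * \<alpha> = e * c"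
    using dP tr dW unfolding P_eq by (simp add: det_2 trace_2) algebra
  have "\<alpha> * (1 - trace (W ** Y)) = 1"
  proof (rule eq_1_if_add_eq_2_mult_eq_1[OF sum])
    have "\<alpha> * (1 - trace (W ** Y)) * (\<alpha> * (1 + trace (W ** Z)))
            = (c * (1 - trace (W ** Y))) * (e * (1 + trace (W ** Z)))"
      using prod by (simp add: mult_ac)
    then show "\<alpha> * (1 - trace (W ** Y)) * (\<alpha> * (1 + trace (W ** Z))) = 1"
      using c e by simp
  qed
  then have "\<alpha> * (1 - trace (W ** Y)) = c * (1 - trace (W ** Y))" using c by simp
  moreover have "1 - trace (W ** Y) \<noteq> 0" using c by auto
  ultimately have "\<alpha> = c" by simp
  then show ?thesis using P_eq by blast
qed

section \<open>Laurent coefficients and perturbations of order \<open>t\<^sup>2\<close>\<close>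

lemma laurent_coeffs_of_tendsto:
  fixes f :: "'a::real_normed_field \<Rightarrow> 'a" and p0 p1 p2 p3 p4 r :: 'a
  assumes lim: "(f \<longlongrightarrow> r) (at 0)"
    and f: "\<And>t. t \<noteq> 0 \<Longrightarrow> f t = (p0 + p1*t + p2*t^2 + p3*t^3 + p4*t^4) / t^2"
  shows "p0 = 0 \<and> p1 = 0 \<and> p2 = r"
proof -
  have nz: "eventually (\<lambda>t. t \<noteq> 0) (at (0::'a))"
    by (rule eventually_neq_at_within)
  have "((\<lambda>t. t^2 * f t) \<longlongrightarrow> 0^2 * r) (at 0)"
    by (intro tendsto_intros lim)
  moreover have "((\<lambda>t. p0 + p1*t + p2*t^2 + p3*t^3 + p4*t^4) \<longlongrightarrow> p0) (at 0)"
    by (rule tendsto_eq_intros refl | simp)+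
  then have "((\<lambda>t. t^2 * f t) \<longlongrightarrow> p0) (at 0)"
    by (rule Lim_transform_eventually) (use nz in \<open>eventually_elim, simp add: f\<close>)
  ultimately have p0: "p0 = 0" using tendsto_unique[OF at_neq_bot] by fastforce
  have "((\<lambda>t. t * f t) \<longlongrightarrow> 0 * r) (at 0)"
    by (intro tendsto_intros lim)
  moreover have "((\<lambda>t. p1 + p2*t + p3*t^2 + p4*t^3) \<longlongrightarrow> p1) (at 0)"
    by (rule tendsto_eq_intros refl | simp)+
  then have "((\<lambda>t. t * f t) \<longlongrightarrow> p1) (at 0)"
    by (rule Lim_transform_eventually)
      (use nz in \<open>eventually_elim, simp add: f p0 eval_nat_numeral field_simps\<close>)
  ultimately have p1: "p1 = 0" using tendsto_unique[OF at_neq_bot] by fastforce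
  have "((\<lambda>t. p2 + p3*t + p4*t^2) \<longlongrightarrow> p2) (at 0)"
    by (rule tendsto_eq_intros refl | simp)+
  then have "(f \<longlongrightarrow> p2) (at 0)"
    by (rule Lim_transform_eventually)
      (use nz in \<open>eventually_elim, simp add: f p0 p1 eval_nat_numeral field_simps\<close>)
  then have "p2 = r" using lim tendsto_unique[OF at_neq_bot] by fastforce
  with p0 p1 show ?thesis by simp
qed

lemma tendsto_div_0_of_norm_le_square:
  fixes E :: "'a::real_normed_field \<Rightarrow> 'a"
  assumes "eventually (\<lambda>t. norm (E t) \<le> B * norm t^2) (at 0)"
  shows "((\<lambda>t. E t / t) \<longlongrightarrow> 0) (at 0)"
proof (rule Lim_null_comparison)
  show "eventually (\<lambda>t. norm (E t / t) \<le> B * norm t) (at 0)"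
    using assms eventually_neq_at_within[of 0 0 UNIV]
  proof eventually_elim
    case (elim t)
    then show ?case by (auto simp: norm_divide divide_le_eq power2_eq_square mult.assoc)
  qed
  have "((\<lambda>t::'a. B * norm t) \<longlongrightarrow> B * norm (0::'a)) (at 0)"
    by (intro tendsto_intros)
  then show "((\<lambda>t::'a. B * norm t) \<longlongrightarrow> 0) (at 0)" by simp
qed

lemma tendsto_mult_diff_0_of_near:
  fixes F X G Z :: "'a::real_normed_field \<Rightarrow> 'a"
  assumes F: "eventually (\<lambda>t. norm (F t - X t) \<le> B * norm t^2) (at 0)"
    and G: "eventually (\<lambda>t. norm (G t - Z t) \<le> B' * norm t^2) (at 0)"
    and X: "((\<lambda>t. t * X t) \<longlongrightarrow> x) (at 0)" and Z: "((\<lambda>t. t * Z t) \<longlongrightarrow> z) (at 0)"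
  shows "((\<lambda>t. F t * G t - X t * Z t) \<longlongrightarrow> 0) (at 0)"
proof -
  \<comment> \<open>\<open>F G - X Z = (F - X) Z + X (G - Z) + (F - X) (G - Z)\<close>,
    with \<open>F - X = o(t)\<close> and \<open>X, Z = O(1/t)\<close>.\<close>
  have dF: "((\<lambda>t. (F t - X t) / t) \<longlongrightarrow> 0) (at 0)"
    and dG: "((\<lambda>t. (G t - Z t) / t) \<longlongrightarrow> 0) (at 0)"
    using F G by (auto intro: tendsto_div_0_of_norm_le_square)
  have "((\<lambda>t. (F t - X t) / t * (t * Z t) + (t * X t) * ((G t - Z t) / t)
             + t * t * ((F t - X t) / t) * ((G t - Z t) / t))
          \<longlongrightarrow> 0 * z + x * 0 + 0 * 0 * 0 * 0) (at 0)"
    by (intro tendsto_intros X Z dF dG)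
  moreover have "eventually (\<lambda>t. (F t - X t) / t * (t * Z t) + (t * X t) * ((G t - Z t) / t)
             + t * t * ((F t - X t) / t) * ((G t - Z t) / t) = F t * G t - X t * Z t) (at 0)"
    using eventually_neq_at_within[of 0 0 UNIV] by eventually_elim (simp add: field_simps)
  ultimately show ?thesis by (simp add: Lim_transform_eventually)
qed

lemma eventually_nth_nth_near:
  fixes F X :: "'a::real_normed_vector \<Rightarrow> 'b::real_normed_vector^'n^'m"
  assumes "eventually (\<lambda>t. norm (F t - X t) \<le> B * norm t^2) (at 0)"
  shows "eventually (\<lambda>t. norm (F t $ i $ j - X t $ i $ j) \<le> B * norm t^2) (at 0)"
  using assms by eventually_elim (metis norm_nth_nth_le order_trans vector_minus_component)

lemma tendsto_det_diff_0_of_near: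
  fixes F X :: "complex \<Rightarrow> complex^2^2"
  assumes near: "eventually (\<lambda>t. norm (F t - X t) \<le> B * norm t^2) (at 0)"
    and X: "\<And>i j. ((\<lambda>t. t * X t $ i $ j) \<longlongrightarrow> x i j) (at 0)"
  shows "((\<lambda>t. det (F t) - det (X t)) \<longlongrightarrow> 0) (at 0)"
proof -
  note entry = tendsto_mult_diff_0_of_near[OF eventually_nth_nth_near[OF near]
      eventually_nth_nth_near[OF near] X X]
  have "((\<lambda>t. (F t$1$1 * F t$2$2 - X t$1$1 * X t$2$2) - (F t$1$2 * F t$2$1 - X t$1$2 * X t$2$1))
          \<longlongrightarrow> 0 - 0) (at 0)"
    by (intro tendsto_diff entry)
  then show ?thesis by (simp add: det_2 algebra_simps)
qed

lemma tendsto_matrix_mult_diff_0_of_near: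
  fixes F X G Z :: "complex \<Rightarrow> complex^2^2"
  assumes F: "eventually (\<lambda>t. norm (F t - X t) \<le> B * norm t^2) (at 0)"
    and G: "eventually (\<lambda>t. norm (G t - Z t) \<le> B' * norm t^2) (at 0)"
    and X: "\<And>i j. ((\<lambda>t. t * X t $ i $ j) \<longlongrightarrow> x i j) (at 0)"
    and Z: "\<And>i j. ((\<lambda>t. t * Z t $ i $ j) \<longlongrightarrow> z i j) (at 0)"
  shows "((\<lambda>t. (G t ** F t) $ i $ j - (Z t ** X t) $ i $ j) \<longlongrightarrow> 0) (at 0)"
proof -
  note entry = tendsto_mult_diff_0_of_near[OF eventually_nth_nth_near[OF G]
      eventually_nth_nth_near[OF F] Z X]
  have "((\<lambda>t. (G t$i$1 * F t$1$j - Z t$i$1 * X t$1$j) + (G t$i$2 * F t$2$j - Z t$i$2 * X t$2$j))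
          \<longlongrightarrow> 0 + 0) (at 0)"
    by (intro tendsto_add entry)
  then show ?thesis by (simp add: matrix_mult_2_nth algebra_simps)
qed

section \<open>Matrix expansions at a simple pole\<close>

definition pole_expansion :: "complex^2^2 \<Rightarrow> complex^2^2 \<Rightarrow> complex \<Rightarrow> complex^2^2" where
  "pole_expansion W Y t = cscale (1 / t) W + mat 1 + cscale t Y"

lemma det_pole_expansion:
  fixes W Y :: "complex^2^2"
  assumes "t \<noteq> 0" "trace W = 0"
  shows "det (pole_expansion W Y t)
           = (det W + (1 - trace (W ** Y)) * t^2 + trace Y * t^3 + det Y * t^4) / t^2"
proof -
  have "W$2$2 = - W$1$1" using assms(2) by (simp add: trace_2 add_eq_0_iff)
  then show ?thesis using assms(1)
    by (simp add: pole_expansion_def det_2 trace_2 matrix_mult_2_nth field_simps eval_nat_numeral)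
qed

lemma pole_expansion_mult_nth:
  fixes V Z P W Y :: "complex^2^2"
  assumes "t \<noteq> 0"
  shows "(pole_expansion V Z t ** P ** pole_expansion W Y t)$i$j =
    ((V ** P ** W)$i$j + (V ** P + P ** W)$i$j * t + (V ** P ** Y + P + Z ** P ** W)$i$j * t^2
     + (P ** Y + Z ** P)$i$j * t^3 + (Z ** P ** Y)$i$j * t^4) / t^2"
proof -
  have "\<forall>i j. (pole_expansion V Z t ** P ** pole_expansion W Y t)$i$j =
    ((V ** P ** W)$i$j + (V ** P + P ** W)$i$j * t + (V ** P ** Y + P + Z ** P ** W)$i$j * t^2
     + (P ** Y + Z ** P)$i$j * t^3 + (Z ** P ** Y)$i$j * t^4) / t^2"
    using assms
    by (simp add: pole_expansion_def forall_2 matrix_mult_2_nth field_simps eval_nat_numeral)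
  then show ?thesis by blast
qed

lemma tendsto_mult_pole_expansion:
  "((\<lambda>t. t * pole_expansion W Y t $ i $ j) \<longlongrightarrow> W $ i $ j) (at 0)"
proof -
  have "((\<lambda>t. W$i$j + t * (mat 1::complex^2^2)$i$j + t * t * Y$i$j) \<longlongrightarrow> W$i$j) (at 0)"
    by (rule tendsto_eq_intros refl | simp)+
  moreover have "eventually (\<lambda>t. W$i$j + t * (mat 1::complex^2^2)$i$j + t * t * Y$i$j
                                  = t * pole_expansion W Y t $ i $ j) (at 0)"
    using eventually_neq_at_within[of 0 0 UNIV]
    by eventually_elim (simp add: pole_expansion_def field_simps)
  ultimately show ?thesis by (rule Lim_transform_eventually)
qed

lemma tendsto_mult_matrix_mult_pole_expansion:
  "((\<lambda>t. t * (C ** pole_expansion W Y t) $ i $ j) \<longlongrightarrow> (C ** W) $ i $ j) (at 0)"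
  "((\<lambda>t. t * (pole_expansion W Y t ** C) $ i $ j) \<longlongrightarrow> (W ** C) $ i $ j) (at 0)"
proof -
  have "((\<lambda>t. C$i$1 * (t * pole_expansion W Y t $1$j) + C$i$2 * (t * pole_expansion W Y t $2$j))
          \<longlongrightarrow> C$i$1 * W$1$j + C$i$2 * W$2$j) (at 0)"
    by (intro tendsto_intros tendsto_mult_pole_expansion)
  then show "((\<lambda>t. t * (C ** pole_expansion W Y t) $ i $ j) \<longlongrightarrow> (C ** W) $ i $ j) (at 0)"
    by (simp add: matrix_mult_2_nth algebra_simps)
  have "((\<lambda>t. (t * pole_expansion W Y t $i$1) * C$1$j + (t * pole_expansion W Y t $i$2) * C$2$j)
          \<longlongrightarrow> W$i$1 * C$1$j + W$i$2 * C$2$j) (at 0)"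
    by (intro tendsto_intros tendsto_mult_pole_expansion)
  then show "((\<lambda>t. t * (pole_expansion W Y t ** C) $ i $ j) \<longlongrightarrow> (W ** C) $ i $ j) (at 0)"
    by (simp add: matrix_mult_2_nth algebra_simps)
qed

lemma det_expansion_coeff:
  fixes F X :: "complex \<Rightarrow> complex^2^2"
  assumes tr: "trace W = 0" and det_F: "eventually (\<lambda>t. det (F t) = 1) (at 0)"
    and near: "eventually (\<lambda>t. norm (F t - X t) \<le> B * norm t^2) (at 0)"
    and X: "\<And>i j. ((\<lambda>t. t * X t $ i $ j) \<longlongrightarrow> x i j) (at 0)"
    and det_X: "\<And>t. t \<noteq> 0 \<Longrightarrow> det (X t) = c * det (pole_expansion W Y t)"
  shows "c * (1 - trace (W ** Y)) = 1"
proof -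
  have "((\<lambda>t. det (F t) - (det (F t) - det (X t))) \<longlongrightarrow> 1 - 0) (at 0)"
    by (intro tendsto_diff tendsto_det_diff_0_of_near[OF near X]
        tendsto_eventually[OF det_F])
  then have "((\<lambda>t. det (X t)) \<longlongrightarrow> 1) (at 0)" by simp
  then have "c * det W = 0 \<and> 0 = (0::complex) \<and> c * (1 - trace (W ** Y)) = 1"
    by (rule laurent_coeffs_of_tendsto[where ?p3.0 = "c * trace Y" and ?p4.0 = "c * det Y"])
      (simp add: det_X det_pole_expansion[OF _ tr] field_simps)
  then show ?thesis by blast
qed

lemma product_expansion_coeffs:
  fixes F G :: "complex \<Rightarrow> complex^2^2"
  assumes inv: "eventually (\<lambda>t. G t ** F t = mat 1) (at 0)"
    and F: "eventually (\<lambda>t. norm (F t - C ** pole_expansion W Y t) \<le> B * norm t^2) (at 0)"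
    and G: "eventually (\<lambda>t. norm (G t - pole_expansion V Z t ** C') \<le> B' * norm t^2) (at 0)"
  defines "P \<equiv> C' ** C"
  shows "V ** P + P ** W = 0" and "V ** P ** Y + P + Z ** P ** W = mat 1"
proof -
  have coeffs: "(V ** P ** W)$i$j = 0 \<and> (V ** P + P ** W)$i$j = 0
                \<and> (V ** P ** Y + P + Z ** P ** W)$i$j = mat 1 $ i $ j" for i j
  proof (rule laurent_coeffs_of_tendsto)
    have "((\<lambda>t. (G t ** F t)$i$j) \<longlongrightarrow> mat 1 $ i $ j) (at 0)"
      by (rule tendsto_eventually) (use inv in eventually_elim, simp)
    then have "((\<lambda>t. (G t ** F t)$i$j - ((G t ** F t)$i$j
              - ((pole_expansion V Z t ** C') ** (C ** pole_expansion W Y t))$i$j))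
            \<longlongrightarrow> mat 1 $ i $ j - 0) (at 0)"
      by (intro tendsto_diff tendsto_matrix_mult_diff_0_of_near[OF F G
            tendsto_mult_matrix_mult_pole_expansion])
    then show "((\<lambda>t. ((pole_expansion V Z t ** C') ** (C ** pole_expansion W Y t))$i$j)
                  \<longlongrightarrow> mat 1 $ i $ j) (at 0)"
      by simp
  next
    fix t :: complex
    assume "t \<noteq> 0"
    then show "((pole_expansion V Z t ** C') ** (C ** pole_expansion W Y t))$i$j =
      ((V ** P ** W)$i$j + (V ** P + P ** W)$i$j * t + (V ** P ** Y + P + Z ** P ** W)$i$j * t^2
       + (P ** Y + Z ** P)$i$j * t^3 + (Z ** P ** Y)$i$j * t^4) / t^2"
      using pole_expansion_mult_nth[of t V Z P W Y i j] by (simp add: P_def matrix_mul_assoc)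
  qed
  show "V ** P + P ** W = 0" "V ** P ** Y + P + Z ** P ** W = mat 1"
    using coeffs by (simp_all add: vec_eq_iff)
qed

lemma expansion_constants:
  fixes F :: "complex \<Rightarrow> complex^2^2" and W C Y1 Ct Yt1 :: "complex^2^2"
  assumes tr: "trace W = 0" and dW: "det W = 0"
    and det_F: "eventually (\<lambda>t. det (F t) = 1) (at 0)"
    and F: "eventually (\<lambda>t. norm (F t - C ** pole_expansion W Y1 t) \<le> B * norm t^2) (at 0)"
    and F_inv: "eventually (\<lambda>t. norm (matrix_inv (F t) - pole_expansion (- W) Yt1 t ** Ct)
                                  \<le> B' * norm t^2) (at 0)"
  shows "det C * (1 - trace (W ** Y1)) = 1"
    and "\<exists>d. Ct ** C = cscale (det C) (mat 1) + cscale d W"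
proof -
  have inv: "eventually (\<lambda>t. matrix_inv (F t) ** F t = mat 1) (at 0)"
    using det_F by eventually_elim (simp add: matrix_inv_mult_left invertible_det_nz)
  have det_inv: "eventually (\<lambda>t. det (matrix_inv (F t)) = 1) (at 0)"
    using inv det_F by eventually_elim (metis det_I det_mul mult_1_right)
  show c: "det C * (1 - trace (W ** Y1)) = 1"
    by (rule det_expansion_coeff[OF tr det_F F tendsto_mult_matrix_mult_pole_expansion(1)])
      (simp add: det_mul)
  have "trace (- W) = 0" using tr by (simp add: trace_def sum_negf)
  then have "det Ct * (1 - trace (- W ** Yt1)) = 1"
    by (rule det_expansion_coeff[OF _ det_inv F_inv tendsto_mult_matrix_mult_pole_expansion(2)])
      (simp add: det_mul)
  then have e: "det Ct * (1 + trace (W ** Yt1)) = 1"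
    by (simp add: uminus_matrix_mult trace_def sum_negf)
  have "- W ** (Ct ** C) + Ct ** C ** W = 0"
    and P: "- W ** (Ct ** C) ** Y1 + Ct ** C + Yt1 ** (Ct ** C) ** W = mat 1"
    using product_expansion_coeffs[OF inv F F_inv] by simp_all
  then have comm: "Ct ** C ** W = W ** (Ct ** C)"
    by (simp add: uminus_matrix_mult add_eq_0_iff)
  show "\<exists>d. Ct ** C = cscale (det C) (mat 1) + cscale d W"
    using P by (intro commuting_matrix_eq_scalar_plus[OF tr dW c e _ comm])
      (simp_all add: det_mul uminus_matrix_mult algebra_simps)
qed

section \<open>Removable singularities and entire functions\<close>

lemma norm_le_SUP_of_continuous_on_compact:
  fixes f :: "'a::topological_space \<Rightarrow> 'b::real_normed_vector"
  assumes "continuous_on S f" "compact S" "w \<in> S"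
  shows "norm (f w) \<le> (SUP x\<in>S. norm (f x))"
  by (intro cSUP_upper[OF assms(3)] bounded_imp_bdd_above compact_imp_bounded
      compact_continuous_image continuous_intros assms(1,2))

lemma eventually_not_in_at_of_finite_cball:
  fixes K :: "'a::real_normed_vector set"
  assumes fin: "\<And>r. finite (K \<inter> cball 0 r)"
  shows "eventually (\<lambda>z. z \<notin> K) (at w)"
proof -
  have "\<not> w islimpt (K \<inter> cball 0 (norm w + 1))"
    using fin by (rule islimpt_finite)
  then have "eventually (\<lambda>z. z \<notin> K \<inter> cball 0 (norm w + 1)) (at w)"
    by (simp add: islimpt_iff_eventually)
  moreover have "eventually (\<lambda>z. z \<in> ball 0 (norm w + 1)) (at w)"
    by (rule eventually_at_in_open') auto
  ultimately show ?thesis by eventually_elim auto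
qed

lemma holomorphic_extension_by_limits:
  fixes f :: "complex \<Rightarrow> complex"
  assumes hol: "f holomorphic_on - K" and fin: "\<And>r. finite (K \<inter> cball 0 r)"
    and lim: "\<And>w. w \<in> K \<Longrightarrow> \<exists>l. (f \<longlongrightarrow> l) (at w)"
  shows "(\<lambda>w. if w \<in> K then Lim (at w) f else f w) holomorphic_on UNIV"
proof -
  define h where "h w = (if w \<in> K then Lim (at w) f else f w)" for w
  have h_tendsto: "(h \<longlongrightarrow> h w) (at w)" if "w \<in> K" for w
  proof -
    obtain l where l: "(f \<longlongrightarrow> l) (at w)" using lim \<open>w \<in> K\<close> by blast
    moreover have "eventually (\<lambda>z. f z = h z) (at w)"
      using eventually_not_in_at_of_finite_cball[OF fin] by eventually_elim (simp add: h_def)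
    ultimately have "(h \<longlongrightarrow> l) (at w)" by (rule Lim_transform_eventually)
    moreover have "h w = l" using tendsto_Lim[OF at_neq_bot l] \<open>w \<in> K\<close> by (simp add: h_def)
    ultimately show ?thesis by simp
  qed
  have h_ball: "h holomorphic_on ball 0 r" for r
  proof (rule no_isolated_singularity'[where K = "K \<inter> cball 0 r"])
    show "(h \<longlongrightarrow> h w) (at w within ball 0 r)" if "w \<in> K \<inter> cball 0 r" for w
      using h_tendsto that by (auto intro: tendsto_within_subset)
    show "h holomorphic_on ball 0 r - K \<inter> cball 0 r"
      by (rule holomorphic_transform[OF holomorphic_on_subset[OF hol]]) (auto simp: h_def)
  qed (use fin in auto)
  have "h holomorphic_on UNIV"
    unfolding holomorphic_on_open[OF open_UNIV]
  proof
    fix z :: complex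
    have "z \<in> ball 0 (norm z + 1)" by simp
    then show "\<exists>f'. (h has_field_derivative f') (at z)"
      using h_ball[of "norm z + 1"] by (simp add: holomorphic_on_open)
  qed
  then show ?thesis by (simp add: h_def[abs_def])
qed

lemma entire_eq_const_of_sphere_bound:
  fixes h :: "complex \<Rightarrow> complex"
  assumes hol: "h holomorphic_on UNIV"
    and bound: "\<And>n w. w \<in> sphere 0 (real n) \<Longrightarrow> norm (h w - c) \<le> b n"
    and b: "b \<longlonglongrightarrow> 0"
  shows "h z = c"
proof -
  obtain N :: nat where N: "norm z < real N" using reals_Archimedean2 by blast
  have "norm (h z - c) \<le> b n" if "n \<ge> N" for n
  proof (rule maximum_modulus_frontier[of "\<lambda>w. h w - c" "ball 0 (real n)"])
    have "(\<lambda>w. h w - c) holomorphic_on UNIV" using hol by (intro holomorphic_intros)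
    then show "(\<lambda>w. h w - c) holomorphic_on interior (ball 0 (real n))"
      and "continuous_on (closure (ball 0 (real n))) (\<lambda>w. h w - c)"
      by (auto intro: holomorphic_on_subset holomorphic_on_imp_continuous_on)
    have "norm z < real n" using N that by linarith
    then show "z \<in> ball 0 (real n)" by simp
    have "0 < real n" using \<open>norm z < real n\<close> norm_ge_zero[of z] by linarith
    then show "\<And>w. w \<in> frontier (ball 0 (real n)) \<Longrightarrow> norm (h w - c) \<le> b n"
      using bound by (simp add: frontier_ball)
  qed simp
  then have "norm (h z - c) \<le> 0"
    using LIMSEQ_le_const[OF b] by blast
  then show ?thesis by simp
qed

section \<open>The half-integer lattice and the discrete Riemann--Hilbert problem\<close>

lemma finite_Zp_inter_abs_le: "finite {x \<in> Zp. \<bar>x\<bar> \<le> R}"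
proof (rule finite_subset)
  show "{x \<in> Zp. \<bar>x\<bar> \<le> R} \<subseteq> (\<lambda>k. of_int k + 1/2) ` {-\<lceil>R\<rceil> - 1 .. \<lceil>R\<rceil>}"
  proof
    fix x assume "x \<in> {x \<in> Zp. \<bar>x\<bar> \<le> R}"
    then obtain k :: int where k: "x = of_int k + 1/2" and "\<bar>x\<bar> \<le> R" by (auto simp: Zp_def)
    then have "-\<lceil>R\<rceil> - 1 \<le> k \<and> k \<le> \<lceil>R\<rceil>"
      using le_of_int_ceiling[of R] by linarith
    then show "x \<in> (\<lambda>k. of_int k + 1/2) ` {-\<lceil>R\<rceil> - 1 .. \<lceil>R\<rceil>}" using k by auto
  qed
qed simp

lemma finite_of_real_Zp_inter_cball: "finite (complex_of_real ` Zp \<inter> cball 0 r)"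
proof (rule finite_subset)
  show "complex_of_real ` Zp \<inter> cball 0 r \<subseteq> complex_of_real ` {x \<in> Zp. \<bar>x\<bar> \<le> r}" by auto
qed (use finite_Zp_inter_abs_le in simp)

lemma abs_Zp_neq_of_nat: "x \<in> Zp \<Longrightarrow> \<bar>x\<bar> \<noteq> real n"
proof
  assume "x \<in> Zp" "\<bar>x\<bar> = real n"
  then obtain k :: int where "\<bar>of_int k + 1/2\<bar> = real n" by (auto simp: Zp_def)
  then have "of_int (2 * k + 1) = real_of_int (2 * int n)
              \<or> of_int (2 * k + 1) = real_of_int (- 2 * int n)"
    by (auto simp: abs_if split: if_splits)
  then have "2 * k + 1 = 2 * int n \<or> 2 * k + 1 = - 2 * int n" by (simp only: of_int_eq_iff)
  then show False by presburger
qed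

lemma sphere_inter_of_real_Zp: "sphere 0 (real n) \<inter> complex_of_real ` Zp = {}"
  using abs_Zp_neq_of_nat by auto

lemma trace_WY: "trace (WY \<sigma> L s a) = 0"
proof -
  have "fvec \<sigma> L s a $ 1 * gvec \<sigma> L s a $ 1 + fvec \<sigma> L s a $ 2 * gvec \<sigma> L s a $ 2 = 0"
    by (simp add: fvec_def gvec_def algebra_simps)
  then show ?thesis by (simp add: WY_def trace_2 add_divide_distrib [symmetric])
qed

lemma det_WY: "det (WY \<sigma> L s a) = 0"
  by (simp add: WY_def det_2)

lemma trace_WY_mult:
  "trace (WY \<sigma> L s a ** M)
     = (\<Sum>i\<in>UNIV. gvec \<sigma> L s a $ i * (M *v fvec \<sigma> L s a) $ i) / complex_of_real (1 - Ms \<sigma> L s a)"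
  by (simp add: WY_def trace_2 matrix_mult_2_nth matrix_vector_mult_def sum_2 add_divide_distrib
      algebra_simps)

lemma dRHP_det_has_limit:
  assumes Y: "dRHP \<sigma> L s Y" and x: "x \<in> Zp"
  shows "\<exists>l. ((\<lambda>z. det (Y z)) \<longlongrightarrow> l) (at (complex_of_real x))"
proof -
  define R where "R z = Y z ** (mat 1 - cscale (1 / (z - complex_of_real x)) (WY \<sigma> L s x))" for z
  have "\<exists>c. ((\<lambda>z. R z $ i $ j) \<longlongrightarrow> c) (at (complex_of_real x))" for i j
    using Y x unfolding dRHP_def R_def by blast
  then obtain c where c: "\<And>i j. ((\<lambda>z. R z $ i $ j) \<longlongrightarrow> c i j) (at (complex_of_real x))"
    by metis
  have "((\<lambda>z. R z $1$1 * R z $2$2 - R z $1$2 * R z $2$1) \<longlongrightarrow> c 1 1 * c 2 2 - c 1 2 * c 2 1)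
          (at (complex_of_real x))"
    by (intro tendsto_intros c)
  moreover have "R z $1$1 * R z $2$2 - R z $1$2 * R z $2$1 = det (Y z)" for z
    unfolding det_2 [symmetric] R_def det_mul det_mat_1_minus_cscale[OF trace_WY det_WY] by simp
  ultimately show ?thesis by auto
qed

lemma dRHP_det_eq_1:
  assumes Y: "dRHP \<sigma> L s Y" and z: "z \<notin> complex_of_real ` Zp"
  shows "det (Y z) = 1"
proof -
  let ?K = "complex_of_real ` Zp"
  define b where "b n = (SUP w\<in>sphere 0 (real n). norm (Y w - mat 1))" for n :: nat
  have Y_hol: "(\<lambda>w. Y w $ i $ j) holomorphic_on - ?K" for i j
    using Y by (simp add: dRHP_def)
  have det_hol: "(\<lambda>w. det (Y w)) holomorphic_on - ?K"
    unfolding det_2 by (intro holomorphic_intros Y_hol)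
  have "continuous_on (- ?K) (\<lambda>w. \<chi> i j. Y w $ i $ j)"
    by (intro continuous_on_vec_lambda holomorphic_on_imp_continuous_on Y_hol)
  then have Y_cont: "continuous_on (- ?K) Y" by simp
  have "continuous_on (sphere 0 (real n)) (\<lambda>w. Y w - mat 1)" for n
    using sphere_inter_of_real_Zp[of n]
    by (intro continuous_intros continuous_on_subset[OF Y_cont]) blast
  then have Y_bound: "norm (Y w - mat 1) \<le> b n" if "w \<in> sphere 0 (real n)" for n w
    unfolding b_def by (rule norm_le_SUP_of_continuous_on_compact) (use that in auto)
  let ?h = "\<lambda>w. if w \<in> ?K then Lim (at w) (\<lambda>z. det (Y z)) else det (Y w)"
  have "?h z = 1"
  proof (rule entire_eq_const_of_sphere_bound[where h = ?h])
    show "?h holomorphic_on UNIV"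
      by (rule holomorphic_extension_by_limits[OF det_hol finite_of_real_Zp_inter_cball])
        (auto intro: dRHP_det_has_limit[OF Y])
    show "norm (?h w - 1) \<le> 2 * b n + 2 * b n ^ 2" if "w \<in> sphere 0 (real n)" for n w
    proof -
      have "w \<notin> ?K" using sphere_inter_of_real_Zp that by blast
      moreover have "norm (Y w - mat 1) ^ 2 \<le> b n ^ 2"
        using Y_bound[OF that] by (intro power_mono) auto
      ultimately show ?thesis
        using norm_det_minus_1_le[of "Y w"] Y_bound[OF that] by simp
    qed
    have "b \<longlonglongrightarrow> 0" using Y unfolding dRHP_def b_def by blast
    then have "(\<lambda>n. 2 * b n + 2 * b n ^ 2) \<longlonglongrightarrow> 2 * 0 + 2 * 0 ^ 2"
      by (intro tendsto_intros)
    then show "(\<lambda>n. 2 * b n + 2 * b n ^ 2) \<longlonglongrightarrow> 0" by simp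
  qed
  then show ?thesis using z by simp
qed

theorem lemma3p3:
  fixes \<sigma> :: "real \<Rightarrow> real" and L s a :: real
    and Y :: "complex \<Rightarrow> complex^2^2"
    and C Y1 Ct Yt1 :: "complex^2^2"
  assumes L: "L > 0"
    and sigma_range: "\<forall>l\<in>Zp. 0 \<le> \<sigma> l \<and> \<sigma> l \<le> 1"
    and sigma_neg: "\<sigma> summable_on {l\<in>Zp. l < 0}"
    and s: "s \<in> Zp"
    and Q: "Qsigma \<sigma> L s > 0"
    and Y: "dRHP \<sigma> L s Y"
    and a: "a \<in> Zp"
    and C_inv: "invertible C"
    and Y_exp: "\<exists>B. \<forall>\<^sub>F z in at (complex_of_real a).
        norm (Y z - C ** (cscale (1 / (z - complex_of_real a)) (WY \<sigma> L s a) + mat 1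
                          + cscale (z - complex_of_real a) Y1))
          \<le> B * norm (z - complex_of_real a)^2"
    and Ct_inv: "invertible Ct"
    and Yinv_exp: "\<exists>B. \<forall>\<^sub>F z in at (complex_of_real a).
        norm (matrix_inv (Y z) - (- cscale (1 / (z - complex_of_real a)) (WY \<sigma> L s a) + mat 1
                          + cscale (z - complex_of_real a) Yt1) ** Ct)
          \<le> B * norm (z - complex_of_real a)^2"
  shows "(\<Sum>i\<in>UNIV. (gvec \<sigma> L s a)$i * (Y1 *v fvec \<sigma> L s a)$i) / complex_of_real (1 - Ms \<sigma> L s a)
           = (det C - 1) / det C \<and>
         (\<exists>d::complex. Ct ** C = cscale (det C) (mat 1) + cscale d (WY \<sigma> L s a))"
proof -
  define W where "W = WY \<sigma> L s a"
  define Ya where "Ya t = Y (t + complex_of_real a)" for t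
  have "eventually (\<lambda>z. det (Y z) = 1) (at (complex_of_real a))"
    using eventually_not_in_at_of_finite_cball[OF finite_of_real_Zp_inter_cball]
    by eventually_elim (rule dRHP_det_eq_1[OF Y])
  then have det_Ya: "eventually (\<lambda>t. det (Ya t) = 1) (at 0)"
    by (simp add: Ya_def eventually_at_to_0[of _ "complex_of_real a"])
  obtain B where B: "eventually (\<lambda>t. norm (Ya t - C ** pole_expansion W Y1 t)
                                     \<le> B * norm t^2) (at 0)"
    using Y_exp
    by (auto simp: Ya_def W_def pole_expansion_def eventually_at_to_0[of _ "complex_of_real a"])
  obtain B' where B': "eventually (\<lambda>t. norm (matrix_inv (Ya t) - pole_expansion (- W) Yt1 t ** Ct)
                                       \<le> B' * norm t^2) (at 0)"
    using Yinv_exp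
    by (auto simp: Ya_def W_def pole_expansion_def cscale_uminus
        eventually_at_to_0[of _ "complex_of_real a"])
  have tr: "trace W = 0" and dW: "det W = 0" by (simp_all add: W_def trace_WY det_WY)
  note constants = expansion_constants[OF tr dW det_Ya B B']
  have "det C \<noteq> 0" and "det C - 1 = trace (W ** Y1) * det C"
    using constants(1) by (auto simp: algebra_simps)
  then have "trace (W ** Y1) = (det C - 1) / det C" by simp
  then show ?thesis using constants(2) by (simp add: W_def trace_WY_mult)
qed

end
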